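(* Let $\mathcal{F}=(W,R,S)$ be any simplified $\mathbf{IL}^-(\mathbf{J4}_{+})$-frame. Then: (1) $\mathcal{F}\models \mathbf{J3}$, i.e. $\mathcal{F}\models (A\rhd C)\land(B\rhd C)\to(A\lor B)\rhd C$ for all formulas $A,B,C$; (2) $\mathcal{F}\models \mathbf{J4}_{+}$, i.e. $\mathcal{F}\models \Box(A\to B)\to(C\rhd A\to C\rhd B)$ for all formulas $A,B,C$; (3) $\mathcal{F}\models \mathbf{J6}$, i.e. $\mathcal{F}\models \Box\lnot A\leftrightarrow A\rhd\bot$ for all formulas $A$; (4) $\mathcal{F}\models \Box(A\to B)\to A\rhd B$ for all formulas $A,B$ if and only if $(\forall x,y\in W)(xRy\Rightarrow ySy)$; (5) $\mathcal{F}\models A\rhd(B\lor C)\land B\rhd C\to A\rhd C$ for all formulas $A,B,C$ if and only if for every $x\in W$ and all $y,z,v\in R[x]$, if $ySz$ and $zSv$ then $ySv$ (where $R[x]=\{y\in W: xRy\}$); (6) $\mathcal{F}\models \Diamond A\rhd A$ for all formulas $A$ if and only if $(\forall x,y,z\in W)(xRy \,\&\, yRz\Rightarrow ySz)$.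
   Context: Modal formulas of interpretability logic are built from propositional variables, $\top$, $\bot$ using $\to,\lor,\land$, the unary operator $\Box$ and the binary operator $\rhd$; $\lnot A$ abbreviates $A\to\bot$ and $\Diamond A:=\lnot\Box\lnot A$. A simplified $\mathbf{IL}^-(\mathbf{J4}_{+})$-frame is a triple $(W,R,S)$ where $W$ is a non-empty set, $R$ is a transitive and conversely well-founded binary relation on $W$, and $S$ is an arbitrary binary relation on $W$. A model on it is given by a forcing relation $\Vdash$ between $W$ and formulas, arbitrary on propositional variables, with the usual Boolean clauses, $x\Vdash\Box A$ iff for all $y$ with $xRy$, $y\Vdash A$, and $x\Vdash A\rhd B$ iff for every $y\in W$ with $xRy$ and $y\Vdash A$ there is $z\in W$ with $xRz$, $ySz$ and $z\Vdash B$. A formula $A$ is valid in the frame ($\mathcal{F}\models A$) if $x\Vdash A$ for every such forcing relation and every $x\in W$. *)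

theory Defs
  imports Main
begin

datatype fm =
    Var nat
  | Top
  | Bot
  | Imp fm fm
  | Or fm fm
  | And fm fm
  | Box fm
  | Rhd fm fm

definition Neg :: "fm \<Rightarrow> fm" where "Neg A = Imp A Bot"
definition Dia :: "fm \<Rightarrow> fm" where "Dia A = Neg (Box (Neg A))"
definition Iff :: "fm \<Rightarrow> fm \<Rightarrow> fm" where "Iff A B = And (Imp A B) (Imp B A)"

definition simp_frame :: "'w set \<Rightarrow> 'w rel \<Rightarrow> 'w rel \<Rightarrow> bool" where
  "simp_frame W R S \<longleftrightarrow> W \<noteq> {} \<and> R \<subseteq> W \<times> W \<and> S \<subseteq> W \<times> W \<and> trans R \<and> wf (R\<inverse>)"

primrec forces :: "'w set \<Rightarrow> 'w rel \<Rightarrow> 'w rel \<Rightarrow> (nat \<Rightarrow> 'w set) \<Rightarrow> 'w \<Rightarrow> fm \<Rightarrow> bool" where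
  "forces W R S V x (Var p) = (x \<in> V p)"
| "forces W R S V x Top = True"
| "forces W R S V x Bot = False"
| "forces W R S V x (Imp A B) = (forces W R S V x A \<longrightarrow> forces W R S V x B)"
| "forces W R S V x (Or A B) = (forces W R S V x A \<or> forces W R S V x B)"
| "forces W R S V x (And A B) = (forces W R S V x A \<and> forces W R S V x B)"
| "forces W R S V x (Box A) = (\<forall>y\<in>W. (x, y) \<in> R \<longrightarrow> forces W R S V y A)"
| "forces W R S V x (Rhd A B) =
     (\<forall>y\<in>W. (x, y) \<in> R \<and> forces W R S V y A \<longrightarrow>
        (\<exists>z\<in>W. (x, z) \<in> R \<and> (y, z) \<in> S \<and> forces W R S V z B))"

definition valid :: "'w set \<Rightarrow> 'w rel \<Rightarrow> 'w rel \<Rightarrow> fm \<Rightarrow> bool" where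
  "valid W R S A \<longleftrightarrow> (\<forall>V. \<forall>x\<in>W. forces W R S V x A)"

end

theory Submission
  imports Defs
begin

text \<open>
  The axioms J3, J4+ and J6 are sound on every frame: they only unfold the forcing clauses.
  For the principles J1, J2+ and J5 of parts (4)--(6), soundness under the frame condition is again a direct unfolding
  (J5 additionally uses transitivity of R to see that the witness lies in R[x]).
  Conversely, each frame condition is refuted by a valuation making the propositional variables
  true at exactly one world each, namely the worlds of a counterexample to the condition.
\<close>

lemma valid_J3: "valid W R S (Imp (And (Rhd A C) (Rhd B C)) (Rhd (Or A B) C))"
  unfolding valid_def by auto

lemma valid_J4_plus: "valid W R S (Imp (Box (Imp A B)) (Imp (Rhd C A) (Rhd C B)))"
  unfolding valid_def by fastforce

lemma valid_J6: "valid W R S (Iff (Box (Neg A)) (Rhd A Bot))"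
  unfolding valid_def Iff_def Neg_def by auto

lemma valid_J1_iff:
  "(\<forall>A B. valid W R S (Imp (Box (Imp A B)) (Rhd A B)))
     \<longleftrightarrow> (\<forall>x\<in>W. \<forall>y\<in>W. (x, y) \<in> R \<longrightarrow> (y, y) \<in> S)"
proof
  assume J1: "\<forall>A B. valid W R S (Imp (Box (Imp A B)) (Rhd A B))"
  show "\<forall>x\<in>W. \<forall>y\<in>W. (x, y) \<in> R \<longrightarrow> (y, y) \<in> S"
  proof (intro ballI impI)
    fix x y assume "x \<in> W" "y \<in> W" "(x, y) \<in> R"
    moreover have "forces W R S (\<lambda>_. {y}) x (Imp (Box (Imp (Var 0) (Var 0))) (Rhd (Var 0) (Var 0)))"
      using J1 \<open>x \<in> W\<close> unfolding valid_def by blast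
    ultimately show "(y, y) \<in> S" by auto
  qed
next
  assume "\<forall>x\<in>W. \<forall>y\<in>W. (x, y) \<in> R \<longrightarrow> (y, y) \<in> S"
  then show "\<forall>A B. valid W R S (Imp (Box (Imp A B)) (Rhd A B))"
    unfolding valid_def by fastforce
qed

lemma valid_J2_plus_iff:
  assumes "R \<subseteq> W \<times> W"
  shows "(\<forall>A B C. valid W R S (Imp (And (Rhd A (Or B C)) (Rhd B C)) (Rhd A C)))
     \<longleftrightarrow> (\<forall>x\<in>W. \<forall>y\<in>R `` {x}. \<forall>z\<in>R `` {x}. \<forall>v\<in>R `` {x}.
            (y, z) \<in> S \<and> (z, v) \<in> S \<longrightarrow> (y, v) \<in> S)"
proof
  assume J2: "\<forall>A B C. valid W R S (Imp (And (Rhd A (Or B C)) (Rhd B C)) (Rhd A C))"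
  show "\<forall>x\<in>W. \<forall>y\<in>R `` {x}. \<forall>z\<in>R `` {x}. \<forall>v\<in>R `` {x}.
          (y, z) \<in> S \<and> (z, v) \<in> S \<longrightarrow> (y, v) \<in> S"
  proof (intro ballI impI)
    fix x y z v
    assume "x \<in> W" and y: "y \<in> R `` {x}" and z: "z \<in> R `` {x}" and v: "v \<in> R `` {x}"
      and S_steps: "(y, z) \<in> S \<and> (z, v) \<in> S"
    define V where "V = (\<lambda>n::nat. if n = 0 then {y} else if n = 1 then {z} else {v})"
    have "y \<in> W" "z \<in> W" "v \<in> W" using y z v assms by auto
    have "forces W R S V x (Imp (And (Rhd (Var 0) (Or (Var 1) (Var 2))) (Rhd (Var 1) (Var 2)))
                              (Rhd (Var 0) (Var 2)))"
      using J2 \<open>x \<in> W\<close> unfolding valid_def by blast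
    moreover have "forces W R S V x (Rhd (Var 0) (Or (Var 1) (Var 2)))"
      using z \<open>z \<in> W\<close> S_steps by (auto simp: V_def)
    moreover have "forces W R S V x (Rhd (Var 1) (Var 2))"
      using v \<open>v \<in> W\<close> S_steps by (auto simp: V_def)
    ultimately have "forces W R S V x (Rhd (Var 0) (Var 2))" by simp
    then show "(y, v) \<in> S" using y \<open>y \<in> W\<close> by (auto simp: V_def)
  qed
next
  assume S_trans: "\<forall>x\<in>W. \<forall>y\<in>R `` {x}. \<forall>z\<in>R `` {x}. \<forall>v\<in>R `` {x}.
                     (y, z) \<in> S \<and> (z, v) \<in> S \<longrightarrow> (y, v) \<in> S"
  show "\<forall>A B C. valid W R S (Imp (And (Rhd A (Or B C)) (Rhd B C)) (Rhd A C))"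
    unfolding valid_def
  proof (intro allI ballI)
    fix A B C V x assume "x \<in> W"
    let ?F = "forces W R S V"
    have "?F x (Rhd A C)" if AtoBC: "?F x (Rhd A (Or B C))" and BtoC: "?F x (Rhd B C)"
      unfolding forces.simps(8)
    proof (intro ballI impI)
      fix y assume "y \<in> W" and y: "(x, y) \<in> R \<and> ?F y A"
      then obtain z where z: "z \<in> W" "(x, z) \<in> R" "(y, z) \<in> S" and "?F z (Or B C)"
        using AtoBC by auto
      show "\<exists>v\<in>W. (x, v) \<in> R \<and> (y, v) \<in> S \<and> ?F v C"
      proof (cases "?F z C")
        case True
        then show ?thesis using z by blast
      next
        case False
        with \<open>?F z (Or B C)\<close> have "?F z B" by simp
        then obtain v where v: "v \<in> W" "(x, v) \<in> R" "(z, v) \<in> S" "?F v C"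
          using BtoC z by auto
        have "(y, v) \<in> S" using S_trans \<open>x \<in> W\<close> y z v by blast
        then show ?thesis using v by blast
      qed
    qed
    then show "?F x (Imp (And (Rhd A (Or B C)) (Rhd B C)) (Rhd A C))" by simp
  qed
qed

lemma valid_J5_iff:
  assumes "trans R"
  shows "(\<forall>A. valid W R S (Rhd (Dia A) A))
     \<longleftrightarrow> (\<forall>x\<in>W. \<forall>y\<in>W. \<forall>z\<in>W. (x, y) \<in> R \<and> (y, z) \<in> R \<longrightarrow> (y, z) \<in> S)"
proof
  assume J5: "\<forall>A. valid W R S (Rhd (Dia A) A)"
  show "\<forall>x\<in>W. \<forall>y\<in>W. \<forall>z\<in>W. (x, y) \<in> R \<and> (y, z) \<in> R \<longrightarrow> (y, z) \<in> S"
  proof (intro ballI impI)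
    fix x y z assume "x \<in> W" "y \<in> W" "z \<in> W" "(x, y) \<in> R \<and> (y, z) \<in> R"
    moreover have "forces W R S (\<lambda>_. {z}) x (Rhd (Dia (Var 0)) (Var 0))"
      using J5 \<open>x \<in> W\<close> unfolding valid_def by blast
    ultimately show "(y, z) \<in> S" by (auto simp: Dia_def Neg_def)
  qed
next
  assume "\<forall>x\<in>W. \<forall>y\<in>W. \<forall>z\<in>W. (x, y) \<in> R \<and> (y, z) \<in> R \<longrightarrow> (y, z) \<in> S"
  then show "\<forall>A. valid W R S (Rhd (Dia A) A)"
    unfolding valid_def Dia_def Neg_def using assms by simp (meson transD)
qed

theorem proposition2p13:
  fixes W :: "'w set" and R S :: "'w rel"
  assumes "simp_frame W R S"
  shows "(\<forall>A B C. valid W R S (Imp (And (Rhd A C) (Rhd B C)) (Rhd (Or A B) C)))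
    \<and> (\<forall>A B C. valid W R S (Imp (Box (Imp A B)) (Imp (Rhd C A) (Rhd C B))))
    \<and> (\<forall>A. valid W R S (Iff (Box (Neg A)) (Rhd A Bot)))
    \<and> ((\<forall>A B. valid W R S (Imp (Box (Imp A B)) (Rhd A B)))
           \<longleftrightarrow> (\<forall>x\<in>W. \<forall>y\<in>W. (x, y) \<in> R \<longrightarrow> (y, y) \<in> S))
    \<and> ((\<forall>A B C. valid W R S (Imp (And (Rhd A (Or B C)) (Rhd B C)) (Rhd A C)))
           \<longleftrightarrow> (\<forall>x\<in>W. \<forall>y\<in>R `` {x}. \<forall>z\<in>R `` {x}. \<forall>v\<in>R `` {x}.
                  (y, z) \<in> S \<and> (z, v) \<in> S \<longrightarrow> (y, v) \<in> S))
    \<and> ((\<forall>A. valid W R S (Rhd (Dia A) A))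
           \<longleftrightarrow> (\<forall>x\<in>W. \<forall>y\<in>W. \<forall>z\<in>W. (x, y) \<in> R \<and> (y, z) \<in> R \<longrightarrow> (y, z) \<in> S))"
proof -
  have "R \<subseteq> W \<times> W" and "trans R"
    using assms unfolding simp_frame_def by auto
  then show ?thesis
    by (intro conjI allI valid_J3 valid_J4_plus valid_J6 valid_J1_iff
        valid_J2_plus_iff valid_J5_iff)
qed

end
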